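(* Let $R\subseteq\mathbb N$ be sparse, $n\in\mathbb N^+$, and $\mathbf A=(A_1,\dots,A_n)$ an $n$-tuple of operators on $R$ with $A_i\neq_R0$ for all $i$. Then there is $\Delta_0$ such that for every $\Delta\ge\Delta_0$ and all distinct $z,w\in R^n_\Delta$, letting $e=\min\{i: z_i\ne w_i\}$, we have $\mathbf A\cdot z>\mathbf A\cdot w$ if and only if ($z_e>w_e$ and $A_e>_R0$) or ($z_e<w_e$ and $A_e<_R0$). In particular, $z\mapsto\mathbf A\cdot z$ is injective on $R^n_\Delta$.
   Context: Let $R\subseteq\mathbb N$ be infinite, enumerated increasingly as $(r_n)_{n\in\mathbb N}$; $\sigma:R\to R$ is the successor map $\sigma(r_n)=r_{n+1}$ and $\sigma^k$ its $k$-fold iterate ($\sigma^0=\mathrm{id}$). An operator on $R$ is a function $R\to\mathbb Z$, $z\mapsto a_m\sigma^m(z)+\dots+a_0\sigma^0(z)$ with $a_i\in\mathbb Z$. For an operator $A$: $A=_R0$ if $Az=0$ for all $z\in R$; $A>_R0$ (resp. $A<_R0$) if $Az>0$ (resp. $Az<0$) for all but finitely many $z\in R$. $R$ is sparse if every operator $A$ satisfies (S1) $A=_R0$ or $A>_R0$ or $A<_R0$; and (S2) if $A>_R0$ then there is $\Delta\in\mathbb N$ with $A(\sigma^\Delta z)>z$ for all $z\in R$. For an $n$-tuple of operators $\mathbf A$ and $z\in R^n$, $\mathbf A\cdot z=A_1z_1+\dots+A_nz_n$. For $\tilde R\subseteq R$ and $\Delta\in\mathbb N$, $\tilde R^n_\Delta=\{(z_1,\dots,z_n)\in\tilde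 R^n: z_i\ge\sigma^\Delta z_{i+1}\text{ for }1\le i\le n\}$ where $z_{n+1}:=\min\tilde R$. *)

theory Defs
  imports Main "HOL-Library.Infinite_Set"
begin

definition enumR :: "nat set \<Rightarrow> nat \<Rightarrow> nat" where
  "enumR R k = Infinite_Set.enumerate R k"

definition sigma :: "nat set \<Rightarrow> nat \<Rightarrow> nat" where
  "sigma R z = enumR R (Suc (THE k. enumR R k = z))"

text \<open>An operator a_m sigma^m + ... + a_0 sigma^0 is given by its coefficient list
  [a_0, ..., a_m]; its value at z.\<close>
definition op_apply :: "nat set \<Rightarrow> int list \<Rightarrow> nat \<Rightarrow> int" where
  "op_apply R a z = (\<Sum>i<length a. a ! i * int ((sigma R ^^ i) z))"

definition op_zero :: "nat set \<Rightarrow> int list \<Rightarrow> bool" where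
  "op_zero R a \<longleftrightarrow> (\<forall>z\<in>R. op_apply R a z = 0)"

definition op_pos :: "nat set \<Rightarrow> int list \<Rightarrow> bool" where
  "op_pos R a \<longleftrightarrow> finite {z \<in> R. \<not> op_apply R a z > 0}"

definition op_neg :: "nat set \<Rightarrow> int list \<Rightarrow> bool" where
  "op_neg R a \<longleftrightarrow> finite {z \<in> R. \<not> op_apply R a z < 0}"

definition sparse :: "nat set \<Rightarrow> bool" where
  "sparse R \<longleftrightarrow> (\<forall>a. (op_zero R a \<or> op_pos R a \<or> op_neg R a) \<and>
     (op_pos R a \<longrightarrow> (\<exists>D. \<forall>z\<in>R. op_apply R a ((sigma R ^^ D) z) > int z)))"

definition dotop :: "nat set \<Rightarrow> int list list \<Rightarrow> nat list \<Rightarrow> int" where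
  "dotop R As z = (\<Sum>i<length As. op_apply R (As ! i) (z ! i))"

text \<open>R^n_Delta (with tilde R = R): z_i >= sigma^Delta z_(i+1) for all i, where z_(n+1) = min R.\<close>
definition RnDelta :: "nat set \<Rightarrow> nat \<Rightarrow> nat \<Rightarrow> nat list set" where
  "RnDelta R n D = {z. length z = n \<and> set z \<subseteq> R \<and>
     (\<forall>i<n. z ! i \<ge> (sigma R ^^ D) (if Suc i < n then z ! Suc i else (LEAST x. x \<in> R)))}"

end

theory Submission
  imports Defs
begin

text \<open>Write the entries of z \<in> R^n_\<Delta> as z_i = r_(a_i). In these index coordinates every
  operator becomes an integer sequence k \<mapsto> A (r_k), and shifts, sums and multiples of such
  sequences are again operators. Sparseness therefore makes each of them eventually of constant
  sign and, when eventually positive, eventually larger than r itself; iterating this, the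
  increments of an eventually positive operator outgrow any fixed multiple of a shifted r.
  Every A_i is bounded by K r_(k+K). For z \<noteq> w in R^n_\<Delta> with first difference at e, all later
  indices lie at least \<Delta> below a_e and b_e, so for large \<Delta> the single increment
  A_e z_e - A_e w_e dominates all later terms and A\<cdot>z - A\<cdot>w has the sign of A_e.\<close>

lemma sum_lessThan_from_first_nonzero:
  fixes h :: "nat \<Rightarrow> 'a::comm_monoid_add"
  assumes "e < n" "\<forall>i<e. h i = 0"
  shows "(\<Sum>i<n. h i) = h e + (\<Sum>i\<in>{Suc e..<n}. h i)"
proof -
  have split: "{..<n} = {..<Suc e} \<union> {Suc e..<n}" using assms(1) by auto
  have "(\<Sum>i<n. h i) = (\<Sum>i<Suc e. h i) + (\<Sum>i\<in>{Suc e..<n}. h i)"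
    unfolding split by (rule sum.union_disjoint) auto
  also have "(\<Sum>i<Suc e. h i) = h e"
    using assms(2) by simp
  finally show ?thesis .
qed

lemma first_difference:
  assumes "length z = length w" "z \<noteq> w"
  defines "e \<equiv> LEAST i. z ! i \<noteq> w ! i"
  shows "e < length z" "z ! e \<noteq> w ! e" "\<forall>i<e. z ! i = w ! i"
proof -
  obtain j where j: "j < length z" "z ! j \<noteq> w ! j"
    using assms(1,2) nth_equalityI by blast
  show "z ! e \<noteq> w ! e" unfolding e_def using j(2) by (rule LeastI)
  show "e < length z" using Least_le[of _ j] j unfolding e_def by fastforce
  show "\<forall>i<e. z ! i = w ! i" unfolding e_def using not_less_Least by blast
qed

locale infinite_nat_set =
  fixes R :: "nat set"
  assumes infinite_R: "infinite R"
begin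

abbreviation r :: "nat \<Rightarrow> nat" where "r \<equiv> enumerate R"

lemma r_in_R: "r k \<in> R"
  using enumerate_in_set[OF infinite_R] .

lemma r_le_iff [simp]: "r m \<le> r n \<longleftrightarrow> m \<le> n"
  using infinite_R by simp

lemma r_less_iff [simp]: "r m < r n \<longleftrightarrow> m < n"
  using infinite_R by simp

lemma r_eq_iff [simp]: "r m = r n \<longleftrightarrow> m = n"
  by (metis le_antisym order_refl r_le_iff)

lemma le_r: "k \<le> r k"
  using le_enumerate[OF infinite_R] .

lemma R_obtain_index:
  assumes "z \<in> R" obtains k where "z = r k"
  using enumerate_Ex[OF infinite_R assms] by metis

lemma sigma_funpow_r: "(sigma R ^^ i) (r k) = r (k + i)"
  by (induction i) (simp_all add: sigma_def enumR_def)

lemma Least_R: "(LEAST x. x \<in> R) = r 0"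
  by (simp add: enumerate_0)

lemma op_apply_r: "op_apply R a (r k) = (\<Sum>i<length a. a ! i * int (r (k + i)))"
  unfolding op_apply_def sigma_funpow_r ..

lemma finite_exceptions_iff_eventually:
  "finite {z \<in> R. \<not> P z} \<longleftrightarrow> (\<forall>\<^sub>F k in sequentially. P (r k))"
proof
  assume "finite {z \<in> R. \<not> P z}"
  then obtain B where B: "\<And>z. z \<in> R \<Longrightarrow> \<not> P z \<Longrightarrow> z \<le> B"
    by (auto simp: finite_nat_set_iff_bounded_le)
  show "\<forall>\<^sub>F k in sequentially. P (r k)"
  proof (rule eventually_sequentiallyI)
    fix k assume "Suc B \<le> k"
    with le_r[of k] B[OF r_in_R, of k] show "P (r k)" by fastforce
  qed
next
  assume "\<forall>\<^sub>F k in sequentially. P (r k)"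
  then obtain N where N: "\<And>k. N \<le> k \<Longrightarrow> P (r k)"
    by (auto simp: eventually_sequentially)
  have "{z \<in> R. \<not> P z} \<subseteq> r ` {..<N}"
  proof
    fix z assume z: "z \<in> {z \<in> R. \<not> P z}"
    then obtain k where "z = r k" using R_obtain_index by blast
    with z N have "k < N" by (metis mem_Collect_eq not_less)
    with \<open>z = r k\<close> show "z \<in> r ` {..<N}" by blast
  qed
  then show "finite {z \<in> R. \<not> P z}" by (rule finite_surj[OF finite_lessThan])
qed

lemma op_pos_iff_eventually: "op_pos R a \<longleftrightarrow> (\<forall>\<^sub>F k in sequentially. op_apply R a (r k) > 0)"
  unfolding op_pos_def finite_exceptions_iff_eventually ..

lemma op_neg_iff_eventually: "op_neg R a \<longleftrightarrow> (\<forall>\<^sub>F k in sequentially. op_apply R a (r k) < 0)"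
  unfolding op_neg_def finite_exceptions_iff_eventually ..

lemma not_op_pos_and_op_neg: "\<not> (op_pos R a \<and> op_neg R a)"
proof
  assume "op_pos R a \<and> op_neg R a"
  then have "\<forall>\<^sub>F k in sequentially. op_apply R a (r k) > 0 \<and> op_apply R a (r k) < 0"
    unfolding op_pos_iff_eventually op_neg_iff_eventually by (simp add: eventually_conj_iff)
  then have "\<forall>\<^sub>F k in sequentially. False" by (rule eventually_mono) linarith
  then show False by simp
qed

text \<open>An operator A in index coordinates, k \<mapsto> A (r k); coefficient functions
  rather than lists make the closure properties below easy.\<close>
definition operator_seq :: "(nat \<Rightarrow> int) \<Rightarrow> bool" where
  "operator_seq f \<longleftrightarrow> (\<exists>N c. \<forall>k. f k = (\<Sum>i<N. c i * int (r (k + i))))"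

lemma operator_seq_op_apply: "operator_seq (\<lambda>k. op_apply R a (r k))"
  unfolding operator_seq_def op_apply_r by blast

lemma operator_seq_obtain_list:
  assumes "operator_seq f" obtains a where "\<And>k. op_apply R a (r k) = f k"
proof -
  from assms obtain N c where f: "\<And>k. f k = (\<Sum>i<N. c i * int (r (k + i)))"
    unfolding operator_seq_def by blast
  have "op_apply R (map c [0..<N]) (r k) = f k" for k
    by (simp add: op_apply_r f)
  then show thesis by (rule that)
qed

lemma operator_seq_add:
  assumes "operator_seq f" "operator_seq g"
  shows "operator_seq (\<lambda>k. f k + g k)"
proof -
  obtain N1 c1 N2 c2 where f: "\<And>k. f k = (\<Sum>i<N1. c1 i * int (r (k + i)))"
    and g: "\<And>k. g k = (\<Sum>i<N2. c2 i * int (r (k + i)))"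
    using assms unfolding operator_seq_def by metis
  define c where "c i = (if i < N1 then c1 i else 0) + (if i < N2 then c2 i else 0)" for i
  have pad: "(\<Sum>i<N1 + N2. if i < M then t i else 0) = (\<Sum>i<M. t i)"
    if "M \<le> N1 + N2" for M and t :: "nat \<Rightarrow> int"
    using that by (simp add: sum.inter_restrict[symmetric] Int_absorb1 flip: lessThan_iff)
  have "(\<Sum>i<N1 + N2. c i * int (r (k + i)))
      = (\<Sum>i<N1 + N2. if i < N1 then c1 i * int (r (k + i)) else 0)
        + (\<Sum>i<N1 + N2. if i < N2 then c2 i * int (r (k + i)) else 0)" for k
    by (auto simp: c_def distrib_right sum.distrib[symmetric] intro!: sum.cong)
  then have "f k + g k = (\<Sum>i<N1 + N2. c i * int (r (k + i)))" for k
    by (simp add: pad f g)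
  then show ?thesis unfolding operator_seq_def by (intro exI[of _ "N1 + N2"] exI[of _ c]) blast
qed

lemma operator_seq_cmult:
  assumes "operator_seq f" shows "operator_seq (\<lambda>k. c * f k)"
proof -
  obtain N c' where "\<And>k. f k = (\<Sum>i<N. c' i * int (r (k + i)))"
    using assms unfolding operator_seq_def by metis
  then have "c * f k = (\<Sum>i<N. (c * c' i) * int (r (k + i)))" for k
    by (simp add: sum_distrib_left mult.assoc)
  then show ?thesis unfolding operator_seq_def by (intro exI[of _ N] exI[of _ "\<lambda>i. c * c' i"]) blast
qed

lemma operator_seq_diff:
  assumes "operator_seq f" "operator_seq g" shows "operator_seq (\<lambda>k. f k - g k)"
  using operator_seq_add[OF assms(1) operator_seq_cmult[OF assms(2), of "-1"]] by simp

lemma operator_seq_shift_Suc: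
  assumes "operator_seq f" shows "operator_seq (\<lambda>k. f (Suc k))"
proof -
  obtain N c where f: "\<And>k. f k = (\<Sum>i<N. c i * int (r (k + i)))"
    using assms unfolding operator_seq_def by metis
  define c' where "c' i = (case i of 0 \<Rightarrow> 0 | Suc j \<Rightarrow> c j)" for i
  have "f (Suc k) = (\<Sum>i<Suc N. c' i * int (r (k + i)))" for k
    unfolding f c'_def by (simp only: sum.lessThan_Suc_shift) simp
  then show ?thesis unfolding operator_seq_def by (intro exI[of _ "Suc N"] exI[of _ c']) blast
qed

lemma operator_seq_shift:
  assumes "operator_seq f" shows "operator_seq (\<lambda>k. f (k + m))"
proof (induction m)
  case (Suc m)
  then show ?case using operator_seq_shift_Suc[OF Suc] by simp
qed (use assms in simp)

lemma operator_seq_r: "operator_seq (\<lambda>k. int (r (k + M)))"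
proof -
  have "int (r (k + M)) = (\<Sum>i<Suc M. (if i = M then 1 else 0) * int (r (k + i)))" for k
    by (simp add: if_distrib cong: if_cong)
  then show ?thesis unfolding operator_seq_def
    by (intro exI[of _ "Suc M"] exI[of _ "\<lambda>i. if i = M then 1 else 0"]) blast
qed

lemma operator_seq_bound:
  assumes "operator_seq f"
  shows "\<forall>\<^sub>F K in sequentially. \<forall>k. \<bar>f k\<bar> \<le> int K * int (r (k + K))"
proof -
  obtain N c where f: "\<And>k. f k = (\<Sum>i<N. c i * int (r (k + i)))"
    using assms unfolding operator_seq_def by metis
  define S where "S = (\<Sum>i<N. \<bar>c i\<bar>)"
  have "\<bar>f k\<bar> \<le> int K * int (r (k + K))" if "max N (nat S) \<le> K" for K k
  proof -
    have "\<bar>f k\<bar> \<le> (\<Sum>i<N. \<bar>c i\<bar> * int (r (k + i)))"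
      unfolding f by (rule order.trans[OF sum_abs]) (simp add: abs_mult)
    also have "\<dots> \<le> (\<Sum>i<N. \<bar>c i\<bar> * int (r (k + K)))"
      using that by (intro sum_mono mult_left_mono) auto
    also have "\<dots> = S * int (r (k + K))"
      by (simp add: S_def sum_distrib_right)
    also have "\<dots> \<le> int K * int (r (k + K))"
      using that by (intro mult_right_mono) auto
    finally show ?thesis .
  qed
  then show ?thesis by (blast intro: eventually_sequentiallyI)
qed

lemma operator_seqs_common_bound:
  fixes f :: "nat \<Rightarrow> nat \<Rightarrow> int"
  assumes "\<forall>i<n. operator_seq (f i)"
  obtains K where "\<forall>i<n. \<forall>k. \<bar>f i k\<bar> \<le> int K * int (r (k + K))"
proof -
  have "\<forall>\<^sub>F K in sequentially. \<forall>i\<in>{..<n}. \<forall>k. \<bar>f i k\<bar> \<le> int K * int (r (k + K))"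
    using assms by (intro eventually_ball_finite) (auto intro: operator_seq_bound)
  then show thesis using that by (auto simp: eventually_sequentially)
qed

end

text \<open>The membership condition of RnDelta in index coordinates z ! i = r (a i); the entry
  after the last one is min R = r 0, whence the bound D \<le> a i.\<close>
definition delta_chain :: "nat \<Rightarrow> nat \<Rightarrow> (nat \<Rightarrow> nat) \<Rightarrow> bool" where
  "delta_chain n D a \<longleftrightarrow> (\<forall>i<n. D \<le> a i) \<and> (\<forall>i. Suc i < n \<longrightarrow> a (Suc i) + D \<le> a i)"

lemma delta_chain_gap:
  assumes "delta_chain n D a" "e < i" "i < n"
  shows "a i + D \<le> a e"
  using assms(2,3)
proof (induction i)
  case (Suc i)
  have step: "a (Suc i) + D \<le> a i"
    using assms(1) Suc.prems(2) unfolding delta_chain_def by blast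
  show ?case
  proof (cases "e = i")
    case False
    with Suc have "a i + D \<le> a e" by simp
    with step show ?thesis by simp
  qed (use step in simp)
qed simp

context infinite_nat_set
begin

lemma tail_bound:
  assumes bound: "\<forall>i<n. \<forall>k. \<bar>f i k\<bar> \<le> int K * int (r (k + K))"
    and a: "delta_chain n D a" and b: "delta_chain n D b" and "b e < a e"
  shows "\<bar>\<Sum>i\<in>{Suc e..<n}. f i (a i) - f i (b i)\<bar> \<le> int (2 * n * K) * int (r (a e - D + K))"
proof -
  let ?B = "int K * int (r (a e - D + K))"
  have single: "\<bar>f i c\<bar> \<le> ?B" if "i < n" "c \<le> a e - D" for i c
  proof -
    have "\<bar>f i c\<bar> \<le> int K * int (r (c + K))" using bound that(1) by blast
    also have "\<dots> \<le> ?B" using that(2) by (intro mult_left_mono) auto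
    finally show ?thesis .
  qed
  have summand: "\<bar>f i (a i) - f i (b i)\<bar> \<le> 2 * ?B" if "i \<in> {Suc e..<n}" for i
  proof -
    have "a i \<le> a e - D" "b i \<le> a e - D"
      using delta_chain_gap[OF a, of e i] delta_chain_gap[OF b, of e i] that \<open>b e < a e\<close> by auto
    with that single[of i "a i"] single[of i "b i"] show ?thesis by auto
  qed
  have "\<bar>\<Sum>i\<in>{Suc e..<n}. f i (a i) - f i (b i)\<bar> \<le> (\<Sum>i\<in>{Suc e..<n}. 2 * ?B)"
    using summand by (intro order.trans[OF sum_abs sum_mono])
  also have "\<dots> = int (n - Suc e) * (2 * ?B)" by simp
  also have "\<dots> \<le> int n * (2 * ?B)" by (intro mult_right_mono) auto
  finally show ?thesis by (simp add: algebra_simps)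
qed

lemma RnDelta_obtain_indices:
  assumes "z \<in> RnDelta R n D"
  obtains a where "length z = n" "\<forall>i<n. z ! i = r (a i)" "delta_chain n D a"
proof -
  have len: "length z = n" and sub: "set z \<subseteq> R"
    and above: "\<forall>i<n. z ! i \<ge> (sigma R ^^ D) (if Suc i < n then z ! Suc i else (LEAST x. x \<in> R))"
    using assms unfolding RnDelta_def by auto
  have "\<forall>i. \<exists>k. i < n \<longrightarrow> z ! i = r k"
    using sub len nth_mem R_obtain_index by (metis subsetD)
  then obtain a where a: "\<forall>i<n. z ! i = r (a i)" by metis
  have "a (Suc i) + D \<le> a i" if "Suc i < n" for i
    using above[rule_format, of i] a that by (simp add: sigma_funpow_r)
  moreover have "D \<le> a i" if "i < n" for i
    using above[rule_format, OF that] a that by (simp add: sigma_funpow_r Least_R split: if_splits)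
  ultimately have "delta_chain n D a"
    unfolding delta_chain_def by blast
  with len a show thesis by (rule that)
qed

end

locale sparse_nat_set = infinite_nat_set +
  assumes sparse_R: "sparse R"
begin

lemma op_neg_iff_not_op_pos:
  assumes "\<not> op_zero R a" shows "op_neg R a \<longleftrightarrow> \<not> op_pos R a"
  using assms sparse_R not_op_pos_and_op_neg unfolding sparse_def by blast

lemma operator_seq_trichotomy:
  assumes "operator_seq f"
  shows "(\<forall>k. f k = 0) \<or> (\<forall>\<^sub>F k in sequentially. f k > 0) \<or> (\<forall>\<^sub>F k in sequentially. f k < 0)"
proof -
  obtain a where a: "\<And>k. op_apply R a (r k) = f k"
    using operator_seq_obtain_list[OF assms] by blast
  have "op_zero R a \<or> op_pos R a \<or> op_neg R a"
    using sparse_R unfolding sparse_def by blast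
  then show ?thesis
    unfolding op_zero_def op_pos_iff_eventually op_neg_iff_eventually a
    by (metis a r_in_R)
qed

lemma operator_seq_exceeds_r:
  assumes "operator_seq f" "\<forall>\<^sub>F k in sequentially. f k > 0"
  shows "\<exists>D. \<forall>k. f (k + D) > int (r k)"
proof -
  obtain a where a: "\<And>k. op_apply R a (r k) = f k"
    using operator_seq_obtain_list[OF assms(1)] by blast
  have "op_pos R a"
    unfolding op_pos_iff_eventually a by (rule assms(2))
  with sparse_R obtain D where "\<forall>z\<in>R. op_apply R a ((sigma R ^^ D) z) > int z"
    unfolding sparse_def by blast
  then show ?thesis
    using r_in_R a sigma_funpow_r by metis
qed

lemma operator_seq_outgrows:
  assumes "operator_seq d" "\<forall>\<^sub>F k in sequentially. d k > 0"
  shows "\<forall>\<^sub>F k in sequentially. \<forall>x. d (x + k) > int c * int (r (x + M))"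
proof -
  have "\<exists>k. \<forall>x. d (x + k) > int c * int (r (x + M))"
  proof (induction c)
    case 0
    from operator_seq_exceeds_r[OF assms] obtain D where "\<forall>x. d (x + D) > int (r x)" ..
    then show ?case by (metis mult_zero_left of_nat_0 of_nat_0_le_iff order.strict_trans1)
  next
    case (Suc c)
    then obtain k where k: "\<forall>x. d (x + k) > int c * int (r (x + M))" ..
    let ?h = "\<lambda>x. d (x + k) - int c * int (r (x + M))"
    have "operator_seq ?h"
      by (intro operator_seq_diff operator_seq_shift operator_seq_cmult assms(1) operator_seq_r)
    moreover have "\<forall>\<^sub>F x in sequentially. ?h x > 0"
      using k by simp
    ultimately obtain D where D: "\<forall>x. ?h (x + D) > int (r x)"
      using operator_seq_exceeds_r by blast
    have "d (x + (M + D + k)) > int (Suc c) * int (r (x + M))" for x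
    proof -
      have "?h ((x + M) + D) > int (r (x + M))" using D by blast
      moreover have "int c * int (r (x + M)) \<le> int c * int (r (x + M + D + M))"
        by (intro mult_left_mono) auto
      ultimately show ?thesis by (simp add: algebra_simps)
    qed
    then show ?case by blast
  qed
  then obtain k where k: "\<forall>x. d (x + k) > int c * int (r (x + M))" ..
  show ?thesis
  proof (rule eventually_sequentiallyI[of k], intro allI)
    fix k' x assume "k \<le> k'"
    have "int c * int (r (x + M)) \<le> int c * int (r ((x + (k' - k)) + M))"
      by (intro mult_left_mono) auto
    also have "\<dots> < d ((x + (k' - k)) + k)" using k by blast
    also have "\<dots> = d (x + k')" using \<open>k \<le> k'\<close> by simp
    finally show "d (x + k') > int c * int (r (x + M))" .
  qed
qed

lemma operator_seq_increments_eventually_pos: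
  assumes g: "operator_seq g" "\<forall>\<^sub>F k in sequentially. g k > 0"
  shows "\<forall>\<^sub>F k in sequentially. g (Suc k) - g k > 0"
proof -
  have "operator_seq (\<lambda>k. g (Suc k) - g k)"
    by (intro operator_seq_diff operator_seq_shift_Suc g(1))
  from operator_seq_trichotomy[OF this] consider
      (zero) "\<forall>k. g (Suc k) - g k = 0"
    | (pos) "\<forall>\<^sub>F k in sequentially. g (Suc k) - g k > 0"
    | (neg) "\<forall>\<^sub>F k in sequentially. g (Suc k) - g k < 0"
    by blast
  then show ?thesis
  proof cases
    case zero
    then have const: "g k = g 0" for k by (induction k) auto
    obtain D where "\<forall>k. g (k + D) > int (r k)"
      using operator_seq_exceeds_r[OF g] ..
    then have "g 0 > int (r (nat (g 0)))" using const by metis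
    moreover have "int (nat (g 0)) \<le> int (r (nat (g 0)))" by (simp only: of_nat_le_iff le_r)
    ultimately show ?thesis by linarith
  next
    case neg
    with g(2) have "\<forall>\<^sub>F k in sequentially. g k > 0 \<and> g (Suc k) - g k < 0"
      by (rule eventually_conj)
    then obtain N where N: "\<And>k. N \<le> k \<Longrightarrow> g k > 0 \<and> g (Suc k) - g k < 0"
      by (auto simp: eventually_sequentially)
    have "g (N + j) \<le> g N - int j" for j
    proof (induction j)
      case (Suc j)
      with N[of "N + j"] show ?case by simp
    qed simp
    from this[of "nat (g N)"] N[of N] N[of "N + nat (g N)"] show ?thesis by simp
  qed
qed

text \<open>The increment from b to a exceeds C r at index a - D + M, which bounds every coordinate
  lying D below a; this is what lets the first differing term dominate.\<close>
lemma operator_seq_gap: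
  assumes g: "operator_seq g" "\<forall>\<^sub>F k in sequentially. g k > 0"
  shows "\<forall>\<^sub>F D in sequentially. \<forall>a b. D \<le> b \<longrightarrow> b < a \<longrightarrow>
           g a - g b > int C * int (r (a - D + M))"
proof -
  define d where "d k = g (Suc k) - g k" for k
  have d_op: "operator_seq d"
    unfolding d_def by (intro operator_seq_diff operator_seq_shift_Suc g(1))
  have d_pos: "\<forall>\<^sub>F k in sequentially. d k > 0"
    unfolding d_def by (rule operator_seq_increments_eventually_pos[OF g])
  then obtain k1 where k1: "\<And>k. k1 \<le> k \<Longrightarrow> d k > 0"
    by (auto simp: eventually_sequentially)
  have mono: "g k \<le> g j" if "k1 \<le> k" "k \<le> j" for k j
    using lift_Suc_mono_le[of "\<lambda>i. g (k1 + i)" "k - k1" "j - k1"] k1 that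
    by (simp add: d_def less_imp_le)
  obtain k2 where k2: "\<And>k x. k2 \<le> k \<Longrightarrow> d (x + k) > int C * int (r (x + M))"
    using operator_seq_outgrows[OF d_op d_pos, of C M] by (auto simp: eventually_sequentially)
  show ?thesis
  proof (rule eventually_sequentiallyI[of "max k1 (Suc k2)"], intro allI impI)
    fix D a b assume D: "max k1 (Suc k2) \<le> D" and "D \<le> b" "b < a"
    then have "g b \<le> g (a - 1)" by (intro mono) auto
    moreover have "d ((a - D) + (D - 1)) > int C * int (r (a - D + M))"
      using D by (intro k2) auto
    moreover have "(a - D) + (D - 1) = a - 1" "Suc (a - 1) = a"
      using D \<open>D \<le> b\<close> \<open>b < a\<close> by auto
    ultimately show "g a - g b > int C * int (r (a - D + M))"
      unfolding d_def by simp
  qed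
qed

lemma leading_term_decides:
  fixes f :: "nat \<Rightarrow> nat \<Rightarrow> int" and s :: "nat \<Rightarrow> int"
  assumes ops: "\<forall>i<n. operator_seq (f i)"
    and sign: "\<forall>i<n. \<forall>\<^sub>F k in sequentially. s i * f i k > 0"
    and unit: "\<forall>i<n. \<bar>s i\<bar> = 1"
  shows "\<forall>\<^sub>F D in sequentially. \<forall>a b e. delta_chain n D a \<and> delta_chain n D b \<and> e < n \<and>
           (\<forall>i<e. a i = b i) \<and> b e < a e \<longrightarrow> s e * (\<Sum>i<n. f i (a i) - f i (b i)) > 0"
proof -
  obtain K where K: "\<forall>i<n. \<forall>k. \<bar>f i k\<bar> \<le> int K * int (r (k + K))"
    using operator_seqs_common_bound[OF ops] .
  define C where "C = 2 * n * K"
  have "\<forall>\<^sub>F D in sequentially. \<forall>a b. D \<le> b \<longrightarrow> b < a \<longrightarrow>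
          s i * f i a - s i * f i b > int C * int (r (a - D + K))" if "i < n" for i
    using operator_seq_gap[OF operator_seq_cmult[of "f i" "s i"], of C K] ops sign that by blast
  then have "\<forall>\<^sub>F D in sequentially. \<forall>i\<in>{..<n}. \<forall>a b. D \<le> b \<longrightarrow> b < a \<longrightarrow>
          s i * f i a - s i * f i b > int C * int (r (a - D + K))"
    by (auto intro: eventually_ball_finite)
  then show ?thesis
  proof (rule eventually_mono, intro allI impI, elim conjE)
    fix D a b e
    assume gap: "\<forall>i\<in>{..<n}. \<forall>a b. D \<le> b \<longrightarrow> b < a \<longrightarrow>
          s i * f i a - s i * f i b > int C * int (r (a - D + K))"
      and a: "delta_chain n D a" and b: "delta_chain n D b" and "e < n"
      and same: "\<forall>i<e. a i = b i" and "b e < a e"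
    define h where "h i = f i (a i) - f i (b i)" for i
    have "(\<Sum>i<n. h i) = h e + (\<Sum>i\<in>{Suc e..<n}. h i)"
      using \<open>e < n\<close> same by (intro sum_lessThan_from_first_nonzero) (simp_all add: h_def)
    moreover have "s e * h e > int C * int (r (a e - D + K))"
    proof -
      have "D \<le> b e" using b \<open>e < n\<close> unfolding delta_chain_def by blast
      with gap \<open>e < n\<close> \<open>b e < a e\<close> show ?thesis
        unfolding h_def right_diff_distrib by blast
    qed
    moreover have "\<bar>s e * (\<Sum>i\<in>{Suc e..<n}. h i)\<bar> \<le> int C * int (r (a e - D + K))"
      using tail_bound[OF K a b \<open>b e < a e\<close>] unit \<open>e < n\<close>
      by (simp add: abs_mult C_def h_def)
    ultimately show "s e * (\<Sum>i<n. f i (a i) - f i (b i)) > 0"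
      unfolding h_def[symmetric] by (simp add: distrib_left)
  qed
qed

lemma dotop_compare_eventually:
  assumes "length As = n" "\<forall>i<n. \<not> op_zero R (As ! i)"
  shows "\<forall>\<^sub>F D in sequentially. \<forall>z\<in>RnDelta R n D. \<forall>w\<in>RnDelta R n D. \<forall>e<n.
           (\<forall>i<e. z ! i = w ! i) \<and> w ! e < z ! e \<longrightarrow>
           (dotop R As w < dotop R As z \<longleftrightarrow> op_pos R (As ! e)) \<and> dotop R As w \<noteq> dotop R As z"
proof -
  define f where "f i k = op_apply R (As ! i) (r k)" for i k
  define s :: "nat \<Rightarrow> int" where "s i = (if op_pos R (As ! i) then 1 else -1)" for i
  have "\<forall>i<n. operator_seq (f i)"
    unfolding f_def using operator_seq_op_apply by blast
  moreover have "\<forall>i<n. \<forall>\<^sub>F k in sequentially. s i * f i k > 0"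
    using op_neg_iff_not_op_pos assms(2)
    by (auto simp: s_def f_def op_pos_iff_eventually op_neg_iff_eventually)
  moreover have "\<forall>i<n. \<bar>s i\<bar> = 1"
    by (simp add: s_def)
  ultimately have decides: "\<forall>\<^sub>F D in sequentially. \<forall>a b e. delta_chain n D a \<and> delta_chain n D b \<and>
      e < n \<and> (\<forall>i<e. a i = b i) \<and> b e < a e \<longrightarrow> s e * (\<Sum>i<n. f i (a i) - f i (b i)) > 0"
    by (rule leading_term_decides)
  show ?thesis
  proof (rule eventually_mono[OF decides], intro ballI allI impI, elim conjE)
    fix D z w e
    assume decide: "\<forall>a b e. delta_chain n D a \<and> delta_chain n D b \<and> e < n \<and>
        (\<forall>i<e. a i = b i) \<and> b e < a e \<longrightarrow> s e * (\<Sum>i<n. f i (a i) - f i (b i)) > 0"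
      and z: "z \<in> RnDelta R n D" and w: "w \<in> RnDelta R n D" and "e < n"
      and same: "\<forall>i<e. z ! i = w ! i" and "w ! e < z ! e"
    obtain a where a: "\<forall>i<n. z ! i = r (a i)" "delta_chain n D a"
      using RnDelta_obtain_indices[OF z] by blast
    obtain b where b: "\<forall>i<n. w ! i = r (b i)" "delta_chain n D b"
      using RnDelta_obtain_indices[OF w] by blast
    have "\<forall>i<e. a i = b i" "b e < a e"
      using a(1) b(1) same \<open>e < n\<close> \<open>w ! e < z ! e\<close> by auto
    with decide a(2) b(2) \<open>e < n\<close> have "s e * (\<Sum>i<n. f i (a i) - f i (b i)) > 0"
      by blast
    moreover have "(\<Sum>i<n. f i (a i) - f i (b i)) = dotop R As z - dotop R As w"
      using a(1) b(1) assms(1) by (simp add: dotop_def f_def sum_subtractf)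
    ultimately show "(dotop R As w < dotop R As z \<longleftrightarrow> op_pos R (As ! e)) \<and>
        dotop R As w \<noteq> dotop R As z"
      by (auto simp: s_def split: if_splits)
  qed
qed

lemma dotop_less_iff_eventually:
  assumes "length As = n" "\<forall>i<n. \<not> op_zero R (As ! i)"
  shows "\<forall>\<^sub>F D in sequentially. \<forall>z\<in>RnDelta R n D. \<forall>w\<in>RnDelta R n D. z \<noteq> w \<longrightarrow>
           (let e = (LEAST i. z ! i \<noteq> w ! i) in
             dotop R As z > dotop R As w \<longleftrightarrow>
               ((z ! e > w ! e \<and> op_pos R (As ! e)) \<or> (z ! e < w ! e \<and> op_neg R (As ! e))))"
proof (rule eventually_mono[OF dotop_compare_eventually[OF assms]], intro ballI impI)
  fix D z w
  assume compare: "\<forall>z\<in>RnDelta R n D. \<forall>w\<in>RnDelta R n D. \<forall>e<n. (\<forall>i<e. z ! i = w ! i) \<and> w ! e < z ! e \<longrightarrow>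
      (dotop R As w < dotop R As z \<longleftrightarrow> op_pos R (As ! e)) \<and> dotop R As w \<noteq> dotop R As z"
    and z: "z \<in> RnDelta R n D" and w: "w \<in> RnDelta R n D" and "z \<noteq> w"
  define e where "e = (LEAST i. z ! i \<noteq> w ! i)"
  have "length z = length w" using z w by (simp add: RnDelta_def)
  note diff = first_difference[OF this \<open>z \<noteq> w\<close>, folded e_def]
  have "e < n" using diff(1) z by (simp add: RnDelta_def)
  have "dotop R As z > dotop R As w \<longleftrightarrow>
      ((z ! e > w ! e \<and> op_pos R (As ! e)) \<or> (z ! e < w ! e \<and> op_neg R (As ! e)))"
  proof (cases "w ! e < z ! e")
    case True
    with compare[rule_format, OF z w \<open>e < n\<close> conjI[OF diff(3) True]] show ?thesis by auto
  next
    case False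
    with diff(2) have "z ! e < w ! e" by simp
    moreover have "\<forall>i<e. w ! i = z ! i" using diff(3) by simp
    ultimately show ?thesis
      using compare[rule_format, OF w z \<open>e < n\<close>] op_neg_iff_not_op_pos assms(2) \<open>e < n\<close> by auto
  qed
  then show "let e = (LEAST i. z ! i \<noteq> w ! i) in dotop R As z > dotop R As w \<longleftrightarrow>
      ((z ! e > w ! e \<and> op_pos R (As ! e)) \<or> (z ! e < w ! e \<and> op_neg R (As ! e)))"
    unfolding e_def Let_def .
qed

lemma inj_on_dotop_eventually:
  assumes "length As = n" "\<forall>i<n. \<not> op_zero R (As ! i)"
  shows "\<forall>\<^sub>F D in sequentially. inj_on (dotop R As) (RnDelta R n D)"
proof (rule eventually_mono[OF dotop_compare_eventually[OF assms]], rule inj_onI, rule ccontr)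
  fix D z w
  assume compare: "\<forall>z\<in>RnDelta R n D. \<forall>w\<in>RnDelta R n D. \<forall>e<n. (\<forall>i<e. z ! i = w ! i) \<and> w ! e < z ! e \<longrightarrow>
      (dotop R As w < dotop R As z \<longleftrightarrow> op_pos R (As ! e)) \<and> dotop R As w \<noteq> dotop R As z"
    and z: "z \<in> RnDelta R n D" and w: "w \<in> RnDelta R n D"
    and eq: "dotop R As z = dotop R As w" and "z \<noteq> w"
  define e where "e = (LEAST i. z ! i \<noteq> w ! i)"
  have "length z = length w" using z w by (simp add: RnDelta_def)
  note diff = first_difference[OF this \<open>z \<noteq> w\<close>, folded e_def]
  have "e < n" using diff(1) z by (simp add: RnDelta_def)
  consider "w ! e < z ! e" | "z ! e < w ! e" using diff(2) by linarith
  then show False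
  proof cases
    case 1
    with compare[rule_format, OF z w \<open>e < n\<close> conjI[OF diff(3) 1]] eq show False by simp
  next
    case 2
    moreover have "\<forall>i<e. w ! i = z ! i" using diff(3) by simp
    ultimately show False using compare[rule_format, OF w z \<open>e < n\<close>] eq by simp
  qed
qed

end

theorem mainTheorem6:
  fixes R :: "nat set" and n :: nat and As :: "int list list"
  assumes "infinite R" and "sparse R" and "n \<ge> 1" and "length As = n"
    and "\<forall>i<n. \<not> op_zero R (As ! i)"
  shows "\<exists>D0. \<forall>D\<ge>D0.
     (\<forall>z\<in>RnDelta R n D. \<forall>w\<in>RnDelta R n D. z \<noteq> w \<longrightarrow>
        (let e = (LEAST i. z ! i \<noteq> w ! i) in
          dotop R As z > dotop R As w \<longleftrightarrow>
            ((z ! e > w ! e \<and> op_pos R (As ! e)) \<or> (z ! e < w ! e \<and> op_neg R (As ! e)))))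
     \<and> inj_on (dotop R As) (RnDelta R n D)"
proof -
  interpret sparse_nat_set R using assms(1,2) by unfold_locales
  have "\<forall>\<^sub>F D in sequentially.
     (\<forall>z\<in>RnDelta R n D. \<forall>w\<in>RnDelta R n D. z \<noteq> w \<longrightarrow>
        (let e = (LEAST i. z ! i \<noteq> w ! i) in
          dotop R As z > dotop R As w \<longleftrightarrow>
            ((z ! e > w ! e \<and> op_pos R (As ! e)) \<or> (z ! e < w ! e \<and> op_neg R (As ! e)))))
     \<and> inj_on (dotop R As) (RnDelta R n D)"
    using dotop_less_iff_eventually[OF assms(4,5)] inj_on_dotop_eventually[OF assms(4,5)]
    by (rule eventually_conj)
  then show ?thesis unfolding eventually_sequentially .
qed

end
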